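(* Let $a>0$, let $m$ be the fixed positive integer of the standing setting, let $0<h\le a$, $\gamma>0$, and $1\le k\le m$. For any $g\in\mathcal C^k[0,h]$ define $w(x):=g(x)x^{\gamma-1}$ for $0<x\le h$ and $w(0):=0$. Then $w\in\mathcal C^{k-1}[0,h]$ and \[ \|w\|_{C^{k-1}[0,h]}\le C\|g^{(k)}\|_{C[0,h]}, \] where $C$ is a positive constant depending only on $a$, $k$ and $\gamma$.
   Context: Standing setting: $0<\alpha<1$, $n$ a positive integer, $m:=\max\{j\in\{0,1,2,\dots\}:j<n\alpha\}$. $C^k[0,h]$ denotes the $k$ times continuously differentiable functions on $[0,h]$ with norm $\|v\|_{C^k[0,h]}=\max_{0\le j\le k}\max_{[0,h]}|v^{(j)}|$, and $\mathcal C^k[0,h]:=\{v\in C^k[0,h]: v^{(j)}(0)=0,\ j=0,1,\dots,k\}$. *)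

theory Defs
  imports "HOL-Analysis.Analysis"
begin

definition m_of :: "nat \<Rightarrow> real \<Rightarrow> nat" where
  "m_of n \<alpha> = Max {j::nat. real j < real n * \<alpha>}"

text \<open>So g \<in> C^k[0,h]
  iff such a D exists, and then D j = g^(j) on [0,h].\<close>
definition deriv_family :: "nat \<Rightarrow> real \<Rightarrow> (real \<Rightarrow> real) \<Rightarrow> (nat \<Rightarrow> real \<Rightarrow> real) \<Rightarrow> bool" where
  "deriv_family k h g D \<longleftrightarrow>
     (\<forall>x\<in>{0..h}. D 0 x = g x) \<and>
     (\<forall>j\<le>k. continuous_on {0..h} (D j)) \<and>
     (\<forall>j<k. \<forall>x\<in>{0..h}. (D j has_real_derivative D (Suc j) x) (at x within {0..h}))"

definition Ck :: "nat \<Rightarrow> real \<Rightarrow> (real \<Rightarrow> real) \<Rightarrow> bool" where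
  "Ck k h g \<longleftrightarrow> (\<exists>D. deriv_family k h g D)"

definition Ck0 :: "nat \<Rightarrow> real \<Rightarrow> (real \<Rightarrow> real) \<Rightarrow> bool" where
  "Ck0 k h g \<longleftrightarrow> (\<exists>D. deriv_family k h g D \<and> (\<forall>j\<le>k. D j 0 = 0))"

definition supnorm :: "real \<Rightarrow> (real \<Rightarrow> real) \<Rightarrow> real" where
  "supnorm h f = Sup ((\<lambda>x. \<bar>f x\<bar>) ` {0..h})"

definition Ck_norm :: "nat \<Rightarrow> real \<Rightarrow> (nat \<Rightarrow> real \<Rightarrow> real) \<Rightarrow> real" where
  "Ck_norm k h D = (MAX j\<in>{..k}. supnorm h (D j))"

end

theory Submission imports Defs begin

text \<open>Since g and its first k derivatives vanish at 0, repeated use of the mean value theorem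
  gives |g^(i)(x)| \<le> \<parallel>g^(k)\<parallel> x^(k-i).  For x > 0 the Leibniz rule writes w^(j)(x) as a fixed
  linear combination of the terms g^(i)(x) x^(\<gamma>-1-j+i), i \<le> j, each of which is therefore
  bounded by \<parallel>g^(k)\<parallel> x^(k-j+\<gamma>-1).  For j \<le> k-1 this exponent is at least \<gamma> > 0, which yields
  the norm bound on [0,h] \<subseteq> [0,a] and continuity at 0; for j < k-1 it exceeds 1, so w^(j) has
  derivative 0 at 0, and the Leibniz formula extended by 0 at the origin is a derivative family
  of w.\<close>

lemma deriv_family_vanishing_at_0_bound:
  assumes df: "deriv_family k h g D" and D0: "\<forall>j\<le>k. D j 0 = 0"
    and M: "\<forall>x\<in>{0..h}. \<bar>D k x\<bar> \<le> M"
  shows "i \<le> k \<Longrightarrow> x \<in> {0..h} \<Longrightarrow> \<bar>D i x\<bar> \<le> M * x ^ (k - i)"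
proof (induction "k - i" arbitrary: i x)
  case 0
  then show ?case using M by simp
next
  case (Suc l)
  then have ik: "i < k" by auto
  have IH: "\<And>t. t \<in> {0..h} \<Longrightarrow> \<bar>D (Suc i) t\<bar> \<le> M * t ^ (k - Suc i)"
    using Suc ik by auto
  have x: "0 \<le> x" "x \<le> h" using Suc.prems by auto
  have M_nonneg: "0 \<le> M" using M x by (meson atLeastAtMost_iff abs_ge_zero order_trans)
  show ?case
  proof (cases "x = 0")
    case True
    then show ?thesis using D0 ik by (simp add: zero_power)
  next
    case False
    hence xp: "0 < x" using x by simp
    have der: "(D i has_derivative (\<lambda>d. d * D (Suc i) t)) (at t within {0..x})"
      if "0 \<le> t" "t \<le> x" for t
    proof -
      have "(D i has_real_derivative D (Suc i) t) (at t within {0..h})"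
        using df ik x that unfolding deriv_family_def by auto
      hence "(D i has_real_derivative D (Suc i) t) (at t within {0..x})"
        by (rule DERIV_subset) (use x in auto)
      thus ?thesis by (simp add: has_field_derivative_def mult.commute[of _ "D (Suc i) t"])
    qed
    obtain t where t: "t \<in> {0<..<x}" "D i x - D i 0 = (x - 0) * D (Suc i) t"
      using mvt_simple[OF xp der] by blast
    have "\<bar>D i x\<bar> = x * \<bar>D (Suc i) t\<bar>" using t D0 ik xp by (simp add: abs_mult)
    also have "\<dots> \<le> x * (M * t ^ (k - Suc i))"
      using IH[of t] t x xp by (intro mult_left_mono) auto
    also have "\<dots> \<le> x * (M * x ^ (k - Suc i))"
      using t M_nonneg xp by (intro mult_left_mono power_mono) auto
    also have "\<dots> = M * x ^ (k - i)"
      using ik by (simp add: Suc_diff_Suc[symmetric] del: Suc_diff_Suc)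
    finally show ?thesis .
  qed
qed

lemma abs_le_supnorm:
  assumes "continuous_on {0..h} f" and "x \<in> {0..h}"
  shows "\<bar>f x\<bar> \<le> supnorm h f"
proof -
  obtain B where "\<And>y. y \<in> {0..h} \<Longrightarrow> norm (f y) \<le> B"
    using continuous_on_compact_bound[OF compact_Icc assms(1)] by auto
  then have "bdd_above ((\<lambda>y. \<bar>f y\<bar>) ` {0..h})"
    by (intro bdd_aboveI[of _ B]) auto
  then show ?thesis
    unfolding supnorm_def using assms(2) by (auto intro: cSup_upper)
qed

lemma supnorm_nonneg:
  assumes "continuous_on {0..h} f" and "0 \<le> h"
  shows "0 \<le> supnorm h f"
  using abs_le_supnorm[OF assms(1), of 0] assms(2) by simp

lemma supnorm_le:
  assumes "0 \<le> h" and "\<And>x. x \<in> {0..h} \<Longrightarrow> \<bar>f x\<bar> \<le> B"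
  shows "supnorm h f \<le> B"
  unfolding supnorm_def using assms by (intro cSup_least) auto

lemma Ck_norm_le:
  assumes "\<And>j. j \<le> k \<Longrightarrow> supnorm h (D j) \<le> B"
  shows "Ck_norm k h D \<le> B"
  unfolding Ck_norm_def using assms by (subst Max_le_iff) auto

text \<open>For x > 0, powr_leibniz \<gamma> D j x is the j-th derivative of g(x) x^(\<gamma>-1).  Differentiating
  c g^(i)(x) x^e gives c g^(i+1)(x) x^e + c e g^(i)(x) x^(e-1); collecting terms yields the
  recursion for the coefficients.\<close>

fun powr_leibniz_coeff :: "real \<Rightarrow> nat \<Rightarrow> nat \<Rightarrow> real" where
  "powr_leibniz_coeff \<gamma> 0 i = (if i = 0 then 1 else 0)"
| "powr_leibniz_coeff \<gamma> (Suc j) i =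
     (if i = 0 then 0 else powr_leibniz_coeff \<gamma> j (i - 1))
     + powr_leibniz_coeff \<gamma> j i * (\<gamma> - 1 - real j + real i)"

lemma powr_leibniz_coeff_eq_0: "j < i \<Longrightarrow> powr_leibniz_coeff \<gamma> j i = 0"
  by (induction j arbitrary: i) auto

definition powr_leibniz :: "real \<Rightarrow> (nat \<Rightarrow> real \<Rightarrow> real) \<Rightarrow> nat \<Rightarrow> real \<Rightarrow> real" where
  "powr_leibniz \<gamma> D j x =
     (\<Sum>i\<le>j. powr_leibniz_coeff \<gamma> j i * D i x * x powr (\<gamma> - 1 - real j + real i))"

lemma powr_leibniz_at_0 [simp]: "powr_leibniz \<gamma> D j 0 = 0"
  by (simp add: powr_leibniz_def)

lemma powr_leibniz_has_real_derivative:
  assumes x: "0 < x"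
    and d: "\<And>i. i \<le> j \<Longrightarrow> (D i has_real_derivative D (Suc i) x) (at x within S)"
  shows "(powr_leibniz \<gamma> D j has_real_derivative powr_leibniz \<gamma> D (Suc j) x) (at x within S)"
proof -
  let ?c = "powr_leibniz_coeff \<gamma>"
  define e where "e i = \<gamma> - 1 - real j + real i" for i
  have pw: "((\<lambda>y. y powr r) has_real_derivative r * x powr (r - 1)) (at x within S)" for r
    using has_real_derivative_powr[OF x] by (rule has_field_derivative_at_within)
  have "(powr_leibniz \<gamma> D j has_real_derivative
      (\<Sum>i\<le>j. ?c j i * (D (Suc i) x * x powr e i + D i x * (e i * x powr (e i - 1)))))
      (at x within S)"
    unfolding powr_leibniz_def e_def[symmetric]
    by (intro DERIV_sum) (use x in \<open>auto simp: mult.assoc intro!: derivative_eq_intros d pw\<close>)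
  moreover have "(\<Sum>i\<le>j. ?c j i * (D (Suc i) x * x powr e i + D i x * (e i * x powr (e i - 1))))
      = powr_leibniz \<gamma> D (Suc j) x"
  proof -
    have shifted: "(\<Sum>i\<le>Suc j. (if i = 0 then 0 else ?c j (i - 1)) * D i x
          * x powr (\<gamma> - 1 - real (Suc j) + real i))
        = (\<Sum>i\<le>j. ?c j i * D (Suc i) x * x powr e i)"
      by (subst sum.atMost_Suc_shift) (simp add: e_def algebra_simps)
    have unshifted: "(\<Sum>i\<le>Suc j. ?c j i * (\<gamma> - 1 - real j + real i) * D i x
          * x powr (\<gamma> - 1 - real (Suc j) + real i))
        = (\<Sum>i\<le>j. ?c j i * D i x * (e i * x powr (e i - 1)))"
      by (simp add: powr_leibniz_coeff_eq_0 e_def algebra_simps)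
    have "powr_leibniz \<gamma> D (Suc j) x
        = (\<Sum>i\<le>Suc j. (if i = 0 then 0 else ?c j (i - 1)) * D i x
            * x powr (\<gamma> - 1 - real (Suc j) + real i))
          + (\<Sum>i\<le>Suc j. ?c j i * (\<gamma> - 1 - real j + real i) * D i x
            * x powr (\<gamma> - 1 - real (Suc j) + real i))"
      unfolding powr_leibniz_def
      by (simp add: sum.distrib[symmetric] algebra_simps del: of_nat_Suc)
    also have "\<dots> = (\<Sum>i\<le>j. ?c j i * (D (Suc i) x * x powr e i + D i x * (e i * x powr (e i - 1))))"
      unfolding shifted unshifted by (simp add: sum.distrib[symmetric] algebra_simps)
    finally show ?thesis by simp
  qed
  ultimately show ?thesis by simp
qed

lemma continuous_powr_leibniz:
  assumes x: "0 < x" and c: "\<And>i. i \<le> j \<Longrightarrow> continuous (at x within S) (D i)"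
  shows "continuous (at x within S) (powr_leibniz \<gamma> D j)"
  unfolding powr_leibniz_def
proof (intro continuous_sum continuous_mult continuous_const c)
  fix i assume "i \<in> {..j}" thus "i \<le> j" by simp
next
  fix i
  show "continuous (at x within S) (\<lambda>y. y powr (\<gamma> - 1 - real j + real i))"
    by (rule continuous_at_within_powr[OF continuous_ident continuous_const]) (use x in simp)
qed

lemma abs_powr_leibniz_le:
  assumes D: "\<And>i x. i \<le> k \<Longrightarrow> x \<in> {0..h} \<Longrightarrow> \<bar>D i x\<bar> \<le> M * x ^ (k - i)"
    and jk: "j \<le> k" and x: "x \<in> {0..h}"
  shows "\<bar>powr_leibniz \<gamma> D j x\<bar>
    \<le> (\<Sum>i\<le>j. \<bar>powr_leibniz_coeff \<gamma> j i\<bar>) * M * x powr (real k - real j + \<gamma> - 1)"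
proof (cases "x = 0")
  case True then show ?thesis by simp
next
  case False
  hence xp: "0 < x" using x by simp
  let ?c = "powr_leibniz_coeff \<gamma> j"
  have term_le: "\<bar>?c i * D i x * x powr (\<gamma> - 1 - real j + real i)\<bar>
      \<le> \<bar>?c i\<bar> * M * x powr (real k - real j + \<gamma> - 1)" if i: "i \<le> j" for i
  proof -
    have "x ^ (k - i) = x powr (real (k - i))"
      using xp by (simp add: powr_realpow)
    also have "real (k - i) = real k - real i"
      using i jk by (simp add: of_nat_diff)
    finally have "\<bar>D i x\<bar> \<le> M * x powr (real k - real i)"
      using D[of i x] i jk x by simp
    then have "\<bar>?c i * D i x * x powr (\<gamma> - 1 - real j + real i)\<bar>
        \<le> \<bar>?c i\<bar> * (M * x powr (real k - real i)) * x powr (\<gamma> - 1 - real j + real i)"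
      by (simp add: abs_mult mult_right_mono mult_left_mono)
    also have "\<dots> = \<bar>?c i\<bar> * M * x powr (real k - real j + \<gamma> - 1)"
      by (simp add: powr_add[symmetric] algebra_simps)
    finally show ?thesis .
  qed
  have "\<bar>powr_leibniz \<gamma> D j x\<bar> \<le> (\<Sum>i\<le>j. \<bar>?c i * D i x * x powr (\<gamma> - 1 - real j + real i)\<bar>)"
    unfolding powr_leibniz_def by (rule sum_abs)
  also have "\<dots> \<le> (\<Sum>i\<le>j. \<bar>?c i\<bar> * M * x powr (real k - real j + \<gamma> - 1))"
    using term_le by (intro sum_mono) auto
  finally show ?thesis by (simp add: sum_distrib_right)
qed

lemma eventually_at_0_within_Icc:
  assumes "\<And>y. y \<in> {0<..h} \<Longrightarrow> P y"
  shows "eventually P (at (0::real) within {0..h})"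
  unfolding eventually_at_filter by (rule always_eventually) (use assms in auto)

lemma tendsto_powr_at_0_within_Icc:
  assumes "0 < p"
  shows "((\<lambda>y. K * y powr p) \<longlongrightarrow> 0) (at (0::real) within {0..h})"
proof -
  have "((\<lambda>y. y powr p) \<longlongrightarrow> 0) (at 0 within {0..h})"
    by (rule tendsto_zero_powrI[OF tendsto_ident_at tendsto_const eventually_at_0_within_Icc])
       (use assms in auto)
  then show ?thesis using tendsto_mult[OF tendsto_const[of K]] by fastforce
qed

lemma continuous_at_0_if_powr_bound:
  fixes f :: "real \<Rightarrow> real"
  assumes b: "\<forall>y\<in>{0..h}. \<bar>f y\<bar> \<le> K * y powr p" and f0: "f 0 = 0" and p: "0 < p"
  shows "continuous (at 0 within {0..h}) f"
proof -
  have "(f \<longlongrightarrow> 0) (at 0 within {0..h})"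
  proof (rule Lim_null_comparison)
    show "eventually (\<lambda>y. norm (f y) \<le> K * y powr p) (at 0 within {0..h})"
      by (rule eventually_at_0_within_Icc) (use b in auto)
  qed (rule tendsto_powr_at_0_within_Icc[OF p])
  thus ?thesis using f0 by (simp add: continuous_within)
qed

lemma has_real_derivative_0_if_powr_bound:
  fixes f :: "real \<Rightarrow> real"
  assumes b: "\<forall>y\<in>{0..h}. \<bar>f y\<bar> \<le> K * y powr p" and f0: "f 0 = 0" and p: "1 < p"
  shows "(f has_real_derivative 0) (at 0 within {0..h})"
  unfolding has_field_derivative_iff
proof (rule Lim_null_comparison)
  show "eventually (\<lambda>y. norm ((f y - f 0) / (y - 0)) \<le> K * y powr (p - 1)) (at 0 within {0..h})"
  proof (rule eventually_at_0_within_Icc)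
    fix y :: real assume y: "y \<in> {0<..h}"
    have "norm ((f y - f 0) / (y - 0)) = \<bar>f y\<bar> / y" using y f0 by simp
    also have "\<dots> \<le> K * y powr p / y" using b y by (intro divide_right_mono) auto
    also have "\<dots> = K * y powr (p - 1)" using y by (simp add: powr_diff)
    finally show "norm ((f y - f 0) / (y - 0)) \<le> K * y powr (p - 1)" .
  qed
qed (rule tendsto_powr_at_0_within_Icc, use p in simp)

lemma deriv_family_powr_leibniz:
  assumes df: "deriv_family k h g D" and D0: "\<forall>j\<le>k. D j 0 = 0"
    and \<gamma>: "0 < \<gamma>" and k: "1 \<le> k"
  shows "deriv_family (k - 1) h (\<lambda>x. if x = 0 then 0 else g x * x powr (\<gamma> - 1)) (powr_leibniz \<gamma> D)"
proof -
  have contD: "continuous_on {0..h} (D j)" if "j \<le> k" for j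
    using df that unfolding deriv_family_def by auto
  define K where "K j = (\<Sum>i\<le>j. \<bar>powr_leibniz_coeff \<gamma> j i\<bar>) * supnorm h (D k)" for j
  have bound: "\<forall>y\<in>{0..h}. \<bar>powr_leibniz \<gamma> D j y\<bar> \<le> K j * y powr (real k - real j + \<gamma> - 1)"
    if "j \<le> k" for j
    unfolding K_def using that
    by (intro ballI abs_powr_leibniz_le deriv_family_vanishing_at_0_bound[OF df D0])
       (auto intro: abs_le_supnorm[OF contD])
  show ?thesis
    unfolding deriv_family_def
  proof (intro conjI ballI allI impI)
    fix x :: real assume "x \<in> {0..h}"
    then show "powr_leibniz \<gamma> D 0 x = (if x = 0 then 0 else g x * x powr (\<gamma> - 1))"
      using df unfolding deriv_family_def by (simp add: powr_leibniz_def)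
  next
    fix j assume j: "j \<le> k - 1"
    show "continuous_on {0..h} (powr_leibniz \<gamma> D j)"
      unfolding continuous_on_eq_continuous_within
    proof
      fix x :: real assume x: "x \<in> {0..h}"
      show "continuous (at x within {0..h}) (powr_leibniz \<gamma> D j)"
      proof (cases "x = 0")
        case True
        have "continuous (at 0 within {0..h}) (powr_leibniz \<gamma> D j)"
          using j k \<gamma> by (intro continuous_at_0_if_powr_bound[OF bound]) auto
        then show ?thesis using True by simp
      next
        case False
        then show ?thesis using contD j k x
          by (intro continuous_powr_leibniz) (auto simp: continuous_on_eq_continuous_within)
      qed
    qed
  next
    fix j x assume j: "j < k - 1" and x: "x \<in> {0..h}"
    show "(powr_leibniz \<gamma> D j has_real_derivative powr_leibniz \<gamma> D (Suc j) x) (at x within {0..h})"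
    proof (cases "x = 0")
      case True
      have "(powr_leibniz \<gamma> D j has_real_derivative 0) (at 0 within {0..h})"
        using j \<gamma> by (intro has_real_derivative_0_if_powr_bound[OF bound]) auto
      then show ?thesis using True by simp
    next
      case False
      then show ?thesis using df x j unfolding deriv_family_def
        by (intro powr_leibniz_has_real_derivative) auto
    qed
  qed
qed

lemma supnorm_powr_leibniz_le:
  assumes df: "deriv_family k h g D" and D0: "\<forall>j\<le>k. D j 0 = 0"
    and \<gamma>: "0 < \<gamma>" and j: "j < k" and h: "0 < h" "h \<le> a"
  shows "supnorm h (powr_leibniz \<gamma> D j)
    \<le> (\<Sum>i\<le>j. \<bar>powr_leibniz_coeff \<gamma> j i\<bar>) * max 1 a powr (real k - real j + \<gamma> - 1)
      * supnorm h (D k)"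
proof (rule supnorm_le)
  let ?S = "\<Sum>i\<le>j. \<bar>powr_leibniz_coeff \<gamma> j i\<bar>" and ?p = "real k - real j + \<gamma> - 1"
  have contDk: "continuous_on {0..h} (D k)"
    using df unfolding deriv_family_def by auto
  have M: "\<forall>x\<in>{0..h}. \<bar>D k x\<bar> \<le> supnorm h (D k)"
    using abs_le_supnorm[OF contDk] by auto
  fix x assume x: "x \<in> {0..h}"
  have "\<bar>powr_leibniz \<gamma> D j x\<bar> \<le> ?S * supnorm h (D k) * x powr ?p"
    using j x by (intro abs_powr_leibniz_le deriv_family_vanishing_at_0_bound[OF df D0 M]) auto
  also have "\<dots> \<le> ?S * supnorm h (D k) * max 1 a powr ?p"
    using x h j \<gamma> supnorm_nonneg[OF contDk]
    by (intro mult_left_mono powr_mono2) (auto intro: sum_nonneg)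
  finally show "\<bar>powr_leibniz \<gamma> D j x\<bar> \<le> ?S * max 1 a powr ?p * supnorm h (D k)"
    by (simp add: algebra_simps)
qed (use h in simp)

theorem lemmaA3:
  fixes a \<gamma> :: real and k :: nat
  assumes "a > 0" and "\<gamma> > 0" and "1 \<le> k"
  shows "\<exists>C>0. \<forall>(\<alpha>::real) (n::nat) (h::real) (g::real \<Rightarrow> real) (D::nat \<Rightarrow> real \<Rightarrow> real).
     0 < \<alpha> \<and> \<alpha> < 1 \<and> 0 < n \<and> k \<le> m_of n \<alpha> \<and> 0 < h \<and> h \<le> a \<and>
     deriv_family k h g D \<and> (\<forall>j\<le>k. D j 0 = 0) \<longrightarrow>
     (\<exists>E. deriv_family (k - 1) h (\<lambda>x. if x = 0 then 0 else g x * x powr (\<gamma> - 1)) E \<and>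
          (\<forall>j\<le>k - 1. E j 0 = 0) \<and>
          Ck_norm (k - 1) h E \<le> C * supnorm h (D k))"
proof -
  define c where "c j = (\<Sum>i\<le>j. \<bar>powr_leibniz_coeff \<gamma> j i\<bar>) * max 1 a powr (real k - real j + \<gamma> - 1)"
    for j
  define C where "C = 1 + (\<Sum>j\<le>k. c j)"
  have c_nonneg: "0 \<le> c j" for j
    unfolding c_def by (simp add: sum_nonneg)
  have c_le: "c j \<le> C" if "j \<le> k" for j
    using member_le_sum[of j "{..k}" c] that c_nonneg unfolding C_def by auto
  have C_pos: "0 < C"
    unfolding C_def using sum_nonneg[of "{..k}" c, OF c_nonneg] by linarith
  have norm_le: "Ck_norm (k - 1) h (powr_leibniz \<gamma> D) \<le> C * supnorm h (D k)"
    if df: "deriv_family k h g D" and D0: "\<forall>j\<le>k. D j 0 = 0" and h: "0 < h" "h \<le> a"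
    for h g D
  proof (rule Ck_norm_le)
    fix j assume "j \<le> k - 1"
    with \<open>1 \<le> k\<close> have j: "j < k" by simp
    have "supnorm h (powr_leibniz \<gamma> D j) \<le> c j * supnorm h (D k)"
      using supnorm_powr_leibniz_le[OF df D0 \<open>0 < \<gamma>\<close> j h] unfolding c_def .
    also have "\<dots> \<le> C * supnorm h (D k)"
      using c_le[of j] j df h supnorm_nonneg[of h "D k"] unfolding deriv_family_def
      by (intro mult_right_mono) auto
    finally show "supnorm h (powr_leibniz \<gamma> D j) \<le> C * supnorm h (D k)" .
  qed
  show ?thesis
    using C_pos norm_le deriv_family_powr_leibniz[OF _ _ \<open>0 < \<gamma>\<close> \<open>1 \<le> k\<close>] powr_leibniz_at_0
    by blast
qed

end
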